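(* Let $f\in L^2(\Omega)$ and let $(u_h;\lambda_h)$, with $u_h=\{u_0,u_b,u_n\}$, be a solution of the primal-dual weak Galerkin scheme. Define the numerical flux $\mathbf{F}_h|_{\partial T}:=u_n\mathbf{n}$ on $\partial T$, for each $T\in\mathcal{T}_h$, where $\mathbf{n}$ is the unit outward normal of $T$. Then $\mathbf{F}_h$ is continuous in the normal direction across each interior edge/face: on $e=\partial T_1\cap\partial T_2$, $$\mathbf{F}_h|_{\partial T_1}\cdot\mathbf{n}_{T_1}+\mathbf{F}_h|_{\partial T_2}\cdot\mathbf{n}_{T_2}=0.$$ Moreover, for every $T\in\mathcal{T}_h$, $$-\int_{\partial T}\mathbf{F}_h\cdot\mathbf{n}\,ds=\int_T f\,dT.$$
   Context: Model problem. Let $\Omega\subset\mathbb{R}^d$ ($d=2,3$) be a bounded polygonal/polyhedral Lipschitz domain, with $\Gamma_D\subset\partial\Omega$ and $\Gamma_N=\partial\Omega\setminus\Gamma_D$. The problem is $$-\nabla\cdot(a\nabla u+\mathbf{b}u)=f,\qquad u=g_1\text{ on }\Gamma_D,\qquad (a\nabla u+\mathbf{b}u)\cdot\mathbf{n}=g_2\text{ on }\Gamma_N,$$ with $a$ symmetric uniformly positive definite, $\mathbf{b}$ bounded, and both $a$ and $\mathbf{b}$ piecewise constant on $\mathcal{T}_h$. Mesh and spaces. $\mathcal{T}_h$ is a shape-regular polygonal/polyhedral partition with $h_T=\mathrm{diam}\,T$. Fix $k\ge1$ and $l\in\{k-1,k\}$. $W_h$ consists of triplets $v=\{v_0,v_b,v_n\}$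 with $v_0|_T\in P_k(T)$, $v_b|_e\in P_k(e)$ and $v_n|_e\in P_l(e)$ on each edge/face $e\subset\partial T$. On each interior $e=\partial T_1\cap\partial T_2$, $v_b$ is single-valued and $v_n|_{\partial T_1}=-v_n|_{\partial T_2}$. Set $W_h^0=\{v\in W_h: v_b=0\text{ on }\Gamma_D,\ v_n=0\text{ on }\Gamma_N\}$. $M_h$ is the space of discontinuous piecewise $P_k$ functions. Weak gradient. $\nabla_w v|_T\in[P_{k-1}(T)]^d$ is defined by $$(\nabla_w v,\psi)_T=-(v_0,\nabla\cdot\psi)_T+\langle v_b,\psi\cdot\mathbf{n}\rangle_{\partial T}\quad\text{for all }\psi\in[P_{k-1}(T)]^d.$$ Bilinear forms. - $s(u,v)=\sum_T h_T^{-3}\langle u_0-u_b,v_0-v_b\rangle_{\partial T}+h_T^{-1}\langle(a\nabla u_0+\mathbf{b}u_0)\cdot\mathbf{n}-u_n,(a\nabla v_0+\mathbf{b}v_0)\cdot\mathbf{n}-v_n\rangle_{\partial T}$; - $b(u,\lambda)=\sum_T(a\nabla_w u+\mathbf{b}u_0,\nabla\lambda)_T-\langle u_n,\lambda\rangle_{\partial T}$; - $c(\lambda,\sigma)=\tau_1\sum_T h_T^2(\nabla\lambda,\nabla\sigma)_T+\tau_2\sum_T h_T^4\sum_{i,j}(\partial^2_{ij}\lambda,\partial^2_{ij}\sigma)_T$, with $\tau_1,\tau_2\ge0$. Scheme. Find $(u_h;\lambda_h)\in W_h\times M_h$ with $u_b=Q_b^{(k)}g_1$ on $\Gamma_D$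 and $u_n=Q_n^{(l)}g_2$ on $\Gamma_N$ (these being $L^2$ projections onto $P_k(e)$ and $P_l(e)$) such that $$s(u_h,v)+b(v,\lambda_h)=0\quad\text{for all }v\in W_h^0,$$ $$-c(\lambda_h,\sigma)+b(u_h,\sigma)=(f,\sigma)\quad\text{for all }\sigma\in M_h.$$ *)

theory Defs
  imports "HOL-Analysis.Analysis"
begin

definition polyfun_le :: "nat \<Rightarrow> ('a::euclidean_space \<Rightarrow> real) \<Rightarrow> bool" where
  "polyfun_le k p \<longleftrightarrow>
     (\<exists>(M::('a \<Rightarrow> nat) set) (c::('a \<Rightarrow> nat) \<Rightarrow> real). finite M \<and>
        (\<forall>\<alpha>\<in>M. (\<Sum>i\<in>Basis. \<alpha> i) \<le> k) \<and>
        (\<forall>x. p x = (\<Sum>\<alpha>\<in>M. c \<alpha> * (\<Prod>i\<in>Basis. (x \<bullet> i) ^ \<alpha> i))))"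

definition vpolyfun_le :: "nat \<Rightarrow> ('a::euclidean_space \<Rightarrow> 'a) \<Rightarrow> bool" where
  "vpolyfun_le m \<psi> \<longleftrightarrow> (\<forall>i\<in>Basis. polyfun_le m (\<lambda>x. \<psi> x \<bullet> i))"

definition grad :: "('a::euclidean_space \<Rightarrow> real) \<Rightarrow> 'a \<Rightarrow> 'a" where
  "grad p x = (\<Sum>i\<in>Basis. frechet_derivative p (at x) i *\<^sub>R i)"

definition hess :: "'a::euclidean_space \<Rightarrow> 'a \<Rightarrow> ('a \<Rightarrow> real) \<Rightarrow> 'a \<Rightarrow> real" where
  "hess i j p x = frechet_derivative (\<lambda>y. frechet_derivative p (at y) j) (at x) i"

definition divg :: "('a::euclidean_space \<Rightarrow> 'a) \<Rightarrow> 'a \<Rightarrow> real" where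
  "divg \<psi> x = (\<Sum>i\<in>Basis. frechet_derivative \<psi> (at x) i \<bullet> i)"

text \<open>For a flat (d-1)-dimensional face e lying in a hyperplane with unit normal n,
  the surface integral over e is realised as the volume integral over the unit prism
  e + [0,1] n of the function extended constantly in the normal direction
  (Cavalieri/Fubini). proj_face is the orthogonal projection onto the hyperplane of e.\<close>
definition prism :: "'a::euclidean_space set \<Rightarrow> 'a \<Rightarrow> 'a set" where
  "prism e n = (\<lambda>(y, t). y + t *\<^sub>R n) ` (e \<times> {0..1})"

definition proj_face :: "'a::euclidean_space set \<Rightarrow> 'a \<Rightarrow> 'a \<Rightarrow> 'a" where
  "proj_face e n x = x - ((x - (SOME p. p \<in> e)) \<bullet> n) *\<^sub>R n"

definition fint :: "'a::euclidean_space set \<Rightarrow> 'a \<Rightarrow> ('a \<Rightarrow> real) \<Rightarrow> real" where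
  "fint e n g = (LINT x:prism e n|lebesgue. g (proj_face e n x))"

definition face_L2 :: "'a::euclidean_space set \<Rightarrow> 'a \<Rightarrow> ('a \<Rightarrow> real) \<Rightarrow> bool" where
  "face_L2 e n g \<longleftrightarrow> set_borel_measurable lebesgue (prism e n) (\<lambda>x. g (proj_face e n x)) \<and>
     set_integrable lebesgue (prism e n) (\<lambda>x. (g (proj_face e n x))\<^sup>2)"

definition lipschitz_domain :: "'a::euclidean_space set \<Rightarrow> bool" where
  "lipschitz_domain \<Omega> \<longleftrightarrow> open \<Omega> \<and> bounded \<Omega> \<and> connected \<Omega> \<and> \<Omega> \<noteq> {} \<and>
     (\<forall>x\<in>frontier \<Omega>. \<exists>r>0. \<exists>\<nu> g L. norm \<nu> = 1 \<and>
        (\<forall>y z. \<nu> \<bullet> y = 0 \<longrightarrow> \<nu> \<bullet> z = 0 \<longrightarrow> \<bar>g y - g z\<bar> \<le> L * norm (y - z)) \<and>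
        \<Omega> \<inter> ball x r = {z \<in> ball x r. \<nu> \<bullet> (z - x) < g ((z - x) - (\<nu> \<bullet> (z - x)) *\<^sub>R \<nu>)})"

definition flat_face :: "'a::euclidean_space set \<Rightarrow> 'a set \<Rightarrow> 'a \<Rightarrow> bool" where
  "flat_face T e n \<longleftrightarrow> compact e \<and> e \<noteq> {} \<and> norm n = 1 \<and>
     aff_dim e = int DIM('a) - 1 \<and> (\<exists>c. e \<subseteq> {x. n \<bullet> x = c}) \<and>
     e = closure (rel_interior e) \<and> e \<subseteq> frontier T \<and>
     (\<forall>x\<in>rel_interior e. \<exists>\<epsilon>>0. \<forall>t. 0 < t \<and> t < \<epsilon> \<longrightarrow>
        x + t *\<^sub>R n \<notin> T \<and> x - t *\<^sub>R n \<in> interior T)"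

definition polytopal_element :: "'a::euclidean_space set \<Rightarrow> 'a set set \<Rightarrow> ('a set \<Rightarrow> 'a) \<Rightarrow> bool" where
  "polytopal_element T fs nr \<longleftrightarrow> compact T \<and> T = closure (interior T) \<and>
     connected (interior T) \<and> finite fs \<and> fs \<noteq> {} \<and> frontier T = \<Union>fs \<and>
     (\<forall>e\<in>fs. flat_face T e (nr e)) \<and>
     (\<forall>e\<in>fs. \<forall>e'\<in>fs. e \<noteq> e' \<longrightarrow> rel_interior e \<inter> rel_interior e' = {})"

text \<open>Partition T_h of closure \<Omega>: faces T are the edges/faces of T, nrm T e the unit
  outward normal of T on e.\<close>
definition wg_mesh :: "'a::euclidean_space set \<Rightarrow> 'a set set \<Rightarrow> ('a set \<Rightarrow> 'a set set)
    \<Rightarrow> ('a set \<Rightarrow> 'a set \<Rightarrow> 'a) \<Rightarrow> bool" where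
  "wg_mesh \<Omega> Th faces nrm \<longleftrightarrow> finite Th \<and> Th \<noteq> {} \<and>
     (\<forall>T\<in>Th. polytopal_element T (faces T) (nrm T)) \<and>
     \<Union>Th = closure \<Omega> \<and>
     (\<forall>T\<in>Th. \<forall>T'\<in>Th. T \<noteq> T' \<longrightarrow> interior T \<inter> interior T' = {}) \<and>
     (\<forall>T\<in>Th. \<forall>e\<in>faces T.
        (e \<subseteq> frontier \<Omega> \<and> (\<forall>T'\<in>Th. T' \<noteq> T \<longrightarrow> e \<notin> faces T')) \<or>
        (\<exists>!T'. T' \<in> Th \<and> T' \<noteq> T \<and> e \<in> faces T'))"

definition bdry_face :: "'a::euclidean_space set \<Rightarrow> 'a set \<Rightarrow> bool" where
  "bdry_face \<Omega> e \<longleftrightarrow> e \<subseteq> frontier \<Omega>"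

definition dir_face :: "'a::euclidean_space set \<Rightarrow> 'a set \<Rightarrow> 'a set \<Rightarrow> bool" where
  "dir_face \<Omega> \<Gamma>D e \<longleftrightarrow> e \<subseteq> frontier \<Omega> \<and> e \<subseteq> \<Gamma>D"

definition neu_face :: "'a::euclidean_space set \<Rightarrow> 'a set \<Rightarrow> 'a set \<Rightarrow> bool" where
  "neu_face \<Omega> \<Gamma>D e \<longleftrightarrow> e \<subseteq> frontier \<Omega> \<and> \<not> e \<subseteq> \<Gamma>D"

text \<open>A weak function v = {v_0, v_b, v_n}: w0 v T is the polynomial v_0 on T,
  wb v e the polynomial v_b on the face e (single-valued, indexed by the face),
  wn v T e the polynomial v_n on the face e seen from T.  Polynomials on T or e are
  represented by (restrictions of) polynomials on the whole space.\<close>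
datatype 'a wfun = WF (w0: "'a set \<Rightarrow> 'a \<Rightarrow> real") (wb: "'a set \<Rightarrow> 'a \<Rightarrow> real")
  (wn: "'a set \<Rightarrow> 'a set \<Rightarrow> 'a \<Rightarrow> real")

definition Wh :: "'a::euclidean_space set set \<Rightarrow> ('a set \<Rightarrow> 'a set set) \<Rightarrow> nat \<Rightarrow> nat \<Rightarrow> 'a wfun set" where
  "Wh Th faces k l = {v.
     (\<forall>T\<in>Th. polyfun_le k (w0 v T)) \<and>
     (\<forall>T\<in>Th. \<forall>e\<in>faces T. polyfun_le k (wb v e) \<and> polyfun_le l (wn v T e)) \<and>
     (\<forall>T1\<in>Th. \<forall>T2\<in>Th. T1 \<noteq> T2 \<longrightarrow> (\<forall>e\<in>faces T1 \<inter> faces T2.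
         \<forall>x\<in>e. wn v T1 e x = - wn v T2 e x))}"

definition Wh0 :: "'a::euclidean_space set \<Rightarrow> 'a set \<Rightarrow> 'a set set \<Rightarrow> ('a set \<Rightarrow> 'a set set)
    \<Rightarrow> nat \<Rightarrow> nat \<Rightarrow> 'a wfun set" where
  "Wh0 \<Omega> \<Gamma>D Th faces k l = {v \<in> Wh Th faces k l.
     (\<forall>T\<in>Th. \<forall>e\<in>faces T. dir_face \<Omega> \<Gamma>D e \<longrightarrow> (\<forall>x\<in>e. wb v e x = 0)) \<and>
     (\<forall>T\<in>Th. \<forall>e\<in>faces T. neu_face \<Omega> \<Gamma>D e \<longrightarrow> (\<forall>x\<in>e. wn v T e x = 0))}"

definition Mh :: "'a::euclidean_space set set \<Rightarrow> nat \<Rightarrow> ('a set \<Rightarrow> 'a \<Rightarrow> real) set" where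
  "Mh Th k = {\<sigma>. \<forall>T\<in>Th. polyfun_le k (\<sigma> T)}"

definition wgrad :: "nat \<Rightarrow> ('a::euclidean_space set \<Rightarrow> 'a set set) \<Rightarrow> ('a set \<Rightarrow> 'a set \<Rightarrow> 'a)
    \<Rightarrow> 'a wfun \<Rightarrow> 'a set \<Rightarrow> 'a \<Rightarrow> 'a" where
  "wgrad k faces nrm v T = (THE \<psi>. vpolyfun_le (k - 1) \<psi> \<and>
     (\<forall>\<phi>. vpolyfun_le (k - 1) \<phi> \<longrightarrow>
        (LINT x:T|lebesgue. \<psi> x \<bullet> \<phi> x) =
          - (LINT x:T|lebesgue. w0 v T x * divg \<phi> x)
          + (\<Sum>e\<in>faces T. fint e (nrm T e) (\<lambda>x. wb v e x * (\<phi> x \<bullet> nrm T e)))))"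

definition cflux :: "('a::euclidean_space set \<Rightarrow> 'a \<Rightarrow> 'a) \<Rightarrow> ('a set \<Rightarrow> 'a) \<Rightarrow> ('a set \<Rightarrow> 'a set \<Rightarrow> 'a)
    \<Rightarrow> 'a wfun \<Rightarrow> 'a set \<Rightarrow> 'a set \<Rightarrow> 'a \<Rightarrow> real" where
  "cflux A bv nrm v T e x = (A T (grad (w0 v T) x) + w0 v T x *\<^sub>R bv T) \<bullet> nrm T e"

definition sform :: "'a::euclidean_space set set \<Rightarrow> ('a set \<Rightarrow> 'a set set) \<Rightarrow> ('a set \<Rightarrow> 'a set \<Rightarrow> 'a)
    \<Rightarrow> ('a set \<Rightarrow> 'a \<Rightarrow> 'a) \<Rightarrow> ('a set \<Rightarrow> 'a) \<Rightarrow> 'a wfun \<Rightarrow> 'a wfun \<Rightarrow> real" where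
  "sform Th faces nrm A bv u v = (\<Sum>T\<in>Th.
      inverse (diameter T ^ 3) * (\<Sum>e\<in>faces T. fint e (nrm T e)
          (\<lambda>x. (w0 u T x - wb u e x) * (w0 v T x - wb v e x)))
    + inverse (diameter T) * (\<Sum>e\<in>faces T. fint e (nrm T e)
          (\<lambda>x. (cflux A bv nrm u T e x - wn u T e x) * (cflux A bv nrm v T e x - wn v T e x))))"

definition bform :: "nat \<Rightarrow> 'a::euclidean_space set set \<Rightarrow> ('a set \<Rightarrow> 'a set set) \<Rightarrow> ('a set \<Rightarrow> 'a set \<Rightarrow> 'a)
    \<Rightarrow> ('a set \<Rightarrow> 'a \<Rightarrow> 'a) \<Rightarrow> ('a set \<Rightarrow> 'a) \<Rightarrow> 'a wfun \<Rightarrow> ('a set \<Rightarrow> 'a \<Rightarrow> real) \<Rightarrow> real" where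
  "bform k Th faces nrm A bv v \<sigma> = (\<Sum>T\<in>Th.
      (LINT x:T|lebesgue. (A T (wgrad k faces nrm v T x) + w0 v T x *\<^sub>R bv T) \<bullet> grad (\<sigma> T) x)
    - (\<Sum>e\<in>faces T. fint e (nrm T e) (\<lambda>x. wn v T e x * \<sigma> T x)))"

definition cform :: "real \<Rightarrow> real \<Rightarrow> 'a::euclidean_space set set
    \<Rightarrow> ('a set \<Rightarrow> 'a \<Rightarrow> real) \<Rightarrow> ('a set \<Rightarrow> 'a \<Rightarrow> real) \<Rightarrow> real" where
  "cform \<tau>1 \<tau>2 Th \<rho> \<sigma> =
     \<tau>1 * (\<Sum>T\<in>Th. diameter T ^ 2 * (LINT x:T|lebesgue. grad (\<rho> T) x \<bullet> grad (\<sigma> T) x))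
   + \<tau>2 * (\<Sum>T\<in>Th. diameter T ^ 4 * (\<Sum>i\<in>Basis. \<Sum>j\<in>Basis.
        (LINT x:T|lebesgue. hess i j (\<rho> T) x * hess i j (\<sigma> T) x)))"

definition l2pair :: "'a::euclidean_space set set \<Rightarrow> ('a \<Rightarrow> real) \<Rightarrow> ('a set \<Rightarrow> 'a \<Rightarrow> real) \<Rightarrow> real" where
  "l2pair Th f \<sigma> = (\<Sum>T\<in>Th. (LINT x:T|lebesgue. f x * \<sigma> T x))"

text \<open>u_b = Q_b^(k) g1 on Dirichlet faces and u_n = Q_n^(l) g2 on Neumann faces,
  written out as the defining L^2-orthogonality of the projections.\<close>
definition pdwg_solution :: "'a::euclidean_space set \<Rightarrow> 'a set \<Rightarrow> 'a set set \<Rightarrow> ('a set \<Rightarrow> 'a set set)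
    \<Rightarrow> ('a set \<Rightarrow> 'a set \<Rightarrow> 'a) \<Rightarrow> ('a set \<Rightarrow> 'a \<Rightarrow> 'a) \<Rightarrow> ('a set \<Rightarrow> 'a) \<Rightarrow> nat \<Rightarrow> nat
    \<Rightarrow> real \<Rightarrow> real \<Rightarrow> ('a \<Rightarrow> real) \<Rightarrow> ('a \<Rightarrow> real) \<Rightarrow> ('a \<Rightarrow> real)
    \<Rightarrow> 'a wfun \<Rightarrow> ('a set \<Rightarrow> 'a \<Rightarrow> real) \<Rightarrow> bool" where
  "pdwg_solution \<Omega> \<Gamma>D Th faces nrm A bv k l \<tau>1 \<tau>2 f g1 g2 uh lamh \<longleftrightarrow>
     uh \<in> Wh Th faces k l \<and> lamh \<in> Mh Th k \<and>
     (\<forall>T\<in>Th. \<forall>e\<in>faces T. dir_face \<Omega> \<Gamma>D e \<longrightarrow>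
        (\<forall>q. polyfun_le k q \<longrightarrow> fint e (nrm T e) (\<lambda>x. (g1 x - wb uh e x) * q x) = 0)) \<and>
     (\<forall>T\<in>Th. \<forall>e\<in>faces T. neu_face \<Omega> \<Gamma>D e \<longrightarrow>
        (\<forall>q. polyfun_le l q \<longrightarrow> fint e (nrm T e) (\<lambda>x. (g2 x - wn uh T e x) * q x) = 0)) \<and>
     (\<forall>v\<in>Wh0 \<Omega> \<Gamma>D Th faces k l. sform Th faces nrm A bv uh v + bform k Th faces nrm A bv v lamh = 0) \<and>
     (\<forall>\<sigma>\<in>Mh Th k. - cform \<tau>1 \<tau>2 Th lamh \<sigma> + bform k Th faces nrm A bv uh \<sigma> = l2pair Th f \<sigma>)"

definition num_flux :: "('a::euclidean_space set \<Rightarrow> 'a set \<Rightarrow> 'a) \<Rightarrow> 'a wfun \<Rightarrow> 'a set \<Rightarrow> 'a set \<Rightarrow> 'a \<Rightarrow> 'a" where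
  "num_flux nrm u T e x = wn u T e x *\<^sub>R nrm T e"

end

theory Submission
  imports Defs
begin

(* Continuity of the flux is built into W_h, whose normal components u_n are antisymmetric
   across interior faces.  Local conservation comes from testing the second equation of the
   scheme with the characteristic function of T: it is piecewise constant, so it lies in M_h,
   its gradient and Hessian vanish, and hence c(lambda_h, sigma) = 0 and b(u_h, sigma) reduces to
   the boundary term -<u_n, 1>_{dT}, while (f, sigma) = (f, 1)_T.  None of the coercivity,
   regularity or boundary-data hypotheses is needed. *)

lemma Wh_wn_antisym:
  assumes "v \<in> Wh Th faces k l" and "T1 \<in> Th" "T2 \<in> Th" "T1 \<noteq> T2"
    and "e \<in> faces T1 \<inter> faces T2" and "x \<in> e"
  shows "wn v T1 e x = - wn v T2 e x"
proof -
  from assms(1) have "\<forall>T1\<in>Th. \<forall>T2\<in>Th. T1 \<noteq> T2 \<longrightarrow>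
      (\<forall>e\<in>faces T1 \<inter> faces T2. \<forall>x\<in>e. wn v T1 e x = - wn v T2 e x)"
    unfolding Wh_def by (simp only: mem_Collect_eq) (elim conjE)
  with assms(2-) show ?thesis by blast
qed

lemma wg_mesh_finite: "wg_mesh \<Omega> Th faces nrm \<Longrightarrow> finite Th"
  unfolding wg_mesh_def by (elim conjE)

lemma wg_mesh_normal_norm:
  assumes "wg_mesh \<Omega> Th faces nrm" and "T \<in> Th" and "e \<in> faces T"
  shows "norm (nrm T e) = 1"
proof -
  from assms(1) have "\<forall>T\<in>Th. polytopal_element T (faces T) (nrm T)"
    unfolding wg_mesh_def by (elim conjE)
  with assms(2) have "\<forall>e\<in>faces T. flat_face T e (nrm T e)"
    unfolding polytopal_element_def by blast
  with assms(3) show ?thesis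
    unfolding flat_face_def by blast
qed

lemma num_flux_inner_normal:
  assumes "norm (nrm T e) = 1"
  shows "num_flux nrm u T e x \<bullet> nrm T e = wn u T e x"
  using assms by (simp add: num_flux_def dot_square_norm)

lemma polyfun_le_const: "polyfun_le k (\<lambda>_. c)"
  unfolding polyfun_le_def
  by (rule exI[of _ "{\<lambda>_. 0}"], rule exI[of _ "\<lambda>_. c"]) simp

lemma grad_const [simp]: "grad (\<lambda>_. c) = (\<lambda>_. 0)"
  unfolding grad_def by (simp add: fun_eq_iff)

lemma hess_const [simp]: "hess i j (\<lambda>_. c) = (\<lambda>_. 0)"
  unfolding hess_def by (simp add: fun_eq_iff)

lemma fint_mult_right: "fint e n (\<lambda>x. g x * c) = fint e n g * c"
  unfolding fint_def by simp

lemma piecewise_const_in_Mh: "(\<lambda>T _. c T) \<in> Mh Th k"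
  unfolding Mh_def by (simp add: polyfun_le_const)

lemma cform_piecewise_const: "cform \<tau>1 \<tau>2 Th \<rho> (\<lambda>T _. c T) = 0"
  unfolding cform_def by simp

lemma bform_piecewise_const:
  "bform k Th faces nrm A bv v (\<lambda>T _. c T)
     = - (\<Sum>T\<in>Th. (\<Sum>e\<in>faces T. fint e (nrm T e) (wn v T e)) * c T)"
  unfolding bform_def
  by (simp add: fint_mult_right sum_distrib_right sum_negf)

lemma l2pair_piecewise_const:
  "l2pair Th f (\<lambda>T _. c T) = (\<Sum>T\<in>Th. (LINT x:T|lebesgue. f x) * c T)"
  unfolding l2pair_def by simp

lemma pdwg_solution_in_Wh:
  assumes "pdwg_solution \<Omega> \<Gamma>D Th faces nrm A bv k l \<tau>1 \<tau>2 f g1 g2 uh lamh"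
  shows "uh \<in> Wh Th faces k l"
  using assms unfolding pdwg_solution_def by (elim conjE)

lemma pdwg_solution_dual_eq:
  assumes "pdwg_solution \<Omega> \<Gamma>D Th faces nrm A bv k l \<tau>1 \<tau>2 f g1 g2 uh lamh"
    and "\<sigma> \<in> Mh Th k"
  shows "- cform \<tau>1 \<tau>2 Th lamh \<sigma> + bform k Th faces nrm A bv uh \<sigma> = l2pair Th f \<sigma>"
proof -
  from assms(1)
  have "\<forall>\<sigma>\<in>Mh Th k. - cform \<tau>1 \<tau>2 Th lamh \<sigma> + bform k Th faces nrm A bv uh \<sigma> = l2pair Th f \<sigma>"
    unfolding pdwg_solution_def by (elim conjE)
  with assms(2) show ?thesis by blast
qed

lemma pdwg_solution_piecewise_const_balance:
  assumes "pdwg_solution \<Omega> \<Gamma>D Th faces nrm A bv k l \<tau>1 \<tau>2 f g1 g2 uh lamh"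
  shows "- (\<Sum>T\<in>Th. (\<Sum>e\<in>faces T. fint e (nrm T e) (wn uh T e)) * c T)
           = (\<Sum>T\<in>Th. (LINT x:T|lebesgue. f x) * c T)"
  using pdwg_solution_dual_eq[OF assms piecewise_const_in_Mh]
  by (simp only: cform_piecewise_const bform_piecewise_const l2pair_piecewise_const) simp

lemma pdwg_solution_local_conservation:
  assumes "pdwg_solution \<Omega> \<Gamma>D Th faces nrm A bv k l \<tau>1 \<tau>2 f g1 g2 uh lamh"
    and "finite Th" and "T \<in> Th"
  shows "- (\<Sum>e\<in>faces T. fint e (nrm T e) (wn uh T e)) = (LINT x:T|lebesgue. f x)"
  using pdwg_solution_piecewise_const_balance[OF assms(1), of "\<lambda>T'. of_bool (T' = T)"]
  by (simp add: sum_mult_of_bool_eq assms(2,3))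

lemma num_flux_normal_continuity:
  assumes "wg_mesh \<Omega> Th faces nrm" and "v \<in> Wh Th faces k l"
    and "T1 \<in> Th" "T2 \<in> Th" "T1 \<noteq> T2" and "e \<in> faces T1 \<inter> faces T2" and "x \<in> e"
  shows "num_flux nrm v T1 e x \<bullet> nrm T1 e + num_flux nrm v T2 e x \<bullet> nrm T2 e = 0"
proof -
  have "norm (nrm T1 e) = 1" "norm (nrm T2 e) = 1"
    using wg_mesh_normal_norm[OF assms(1)] assms(3,4,6) by blast+
  moreover have "wn v T1 e x = - wn v T2 e x"
    using Wh_wn_antisym[OF assms(2-)] .
  ultimately show ?thesis
    by (simp add: num_flux_inner_normal)
qed

lemma num_flux_local_conservation:
  assumes "wg_mesh \<Omega> Th faces nrm" and "T \<in> Th"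
    and "pdwg_solution \<Omega> \<Gamma>D Th faces nrm A bv k l \<tau>1 \<tau>2 f g1 g2 uh lamh"
  shows "- (\<Sum>e\<in>faces T. fint e (nrm T e) (\<lambda>x. num_flux nrm uh T e x \<bullet> nrm T e))
           = (LINT x:T|lebesgue. f x)"
proof -
  have "(\<Sum>e\<in>faces T. fint e (nrm T e) (\<lambda>x. num_flux nrm uh T e x \<bullet> nrm T e))
          = (\<Sum>e\<in>faces T. fint e (nrm T e) (wn uh T e))"
    using wg_mesh_normal_norm[OF assms(1,2)]
    by (intro sum.cong refl arg_cong[where f = "fint _ _"]) (simp add: num_flux_inner_normal fun_eq_iff)
  also have "- \<dots> = (LINT x:T|lebesgue. f x)"
    using pdwg_solution_local_conservation[OF assms(3) wg_mesh_finite[OF assms(1)] assms(2)] .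
  finally show ?thesis .
qed

theorem theorem4p1:
  fixes \<Omega> \<Gamma>D :: "'a::euclidean_space set"
    and Th :: "'a set set" and faces :: "'a set \<Rightarrow> 'a set set" and nrm :: "'a set \<Rightarrow> 'a set \<Rightarrow> 'a"
    and A :: "'a set \<Rightarrow> 'a \<Rightarrow> 'a" and bv :: "'a set \<Rightarrow> 'a"
    and k l :: nat and \<tau>1 \<tau>2 :: real
    and f g1 g2 :: "'a \<Rightarrow> real"
    and uh :: "'a wfun" and lamh :: "'a set \<Rightarrow> 'a \<Rightarrow> real"
  assumes dim: "DIM('a) = 2 \<or> DIM('a) = 3"
    and dom: "lipschitz_domain \<Omega>"
    and mesh: "wg_mesh \<Omega> Th faces nrm"
    and GD: "\<Gamma>D \<subseteq> frontier \<Omega>"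
    and GD_resolved: "\<forall>T\<in>Th. \<forall>e\<in>faces T. e \<subseteq> frontier \<Omega> \<longrightarrow>
                        e \<subseteq> \<Gamma>D \<or> e \<subseteq> closure (frontier \<Omega> - \<Gamma>D)"
    and A_lin: "\<forall>T\<in>Th. linear (A T)"
    and A_sym: "\<forall>T\<in>Th. \<forall>\<xi> \<eta>. A T \<xi> \<bullet> \<eta> = \<xi> \<bullet> A T \<eta>"
    and A_pos: "\<exists>\<alpha>>0. \<forall>T\<in>Th. \<forall>\<xi>. A T \<xi> \<bullet> \<xi> \<ge> \<alpha> * (norm \<xi>)\<^sup>2"
    and k: "k \<ge> 1" and l: "l = k - 1 \<or> l = k"
    and tau: "\<tau>1 \<ge> 0" "\<tau>2 \<ge> 0"
    and f_L2: "set_borel_measurable lebesgue \<Omega> f" "set_integrable lebesgue \<Omega> (\<lambda>x. (f x)\<^sup>2)"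
    and g1_L2: "\<forall>T\<in>Th. \<forall>e\<in>faces T. dir_face \<Omega> \<Gamma>D e \<longrightarrow> face_L2 e (nrm T e) g1"
    and g2_L2: "\<forall>T\<in>Th. \<forall>e\<in>faces T. neu_face \<Omega> \<Gamma>D e \<longrightarrow> face_L2 e (nrm T e) g2"
    and sol: "pdwg_solution \<Omega> \<Gamma>D Th faces nrm A bv k l \<tau>1 \<tau>2 f g1 g2 uh lamh"
  shows "(\<forall>T1\<in>Th. \<forall>T2\<in>Th. T1 \<noteq> T2 \<longrightarrow> (\<forall>e\<in>faces T1 \<inter> faces T2. \<forall>x\<in>e.
            num_flux nrm uh T1 e x \<bullet> nrm T1 e + num_flux nrm uh T2 e x \<bullet> nrm T2 e = 0))
       \<and> (\<forall>T\<in>Th. - (\<Sum>e\<in>faces T. fint e (nrm T e) (\<lambda>x. num_flux nrm uh T e x \<bullet> nrm T e))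
                  = (LINT x:T|lebesgue. f x))"
  using num_flux_normal_continuity[OF mesh pdwg_solution_in_Wh[OF sol]]
    num_flux_local_conservation[OF mesh _ sol]
  by blast

end
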